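(* Let $1\le p\ne q<\infty$ and let $T\in B(\ell^p)$ and $S\in B(\ell^q)$ be invertible. Then $T$ and $S$ are equivalent after extension but are not equivalent after one-sided extension.
   Context: $\ell^p=\ell^p(\mathbb N)$ over $\mathbb C$; $B(X,Y)$ denotes bounded linear operators; invertibility means bounded inverse; $X\oplus Y$ is the $\ell^2$-direct sum and $\mathrm{id}_X$ the identity. Operators $T\in B(X)$ and $S\in B(Y)$ are equivalent after extension if there exist Banach spaces $X'$, $Y'$ and invertible $E\in B(Y\oplus Y',X\oplus X')$, $F\in B(X\oplus X',Y\oplus Y')$ with $\begin{bmatrix}T&0\\0&\mathrm{id}_{X'}\end{bmatrix}=E\begin{bmatrix}S&0\\0&\mathrm{id}_{Y'}\end{bmatrix}F$. They are equivalent after one-sided extension if this holds with one of $X'$ or $Y'$ equal to the trivial space $\{0\}$. *)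

theory Defs
  imports Complex_Main
begin

record 'a cnspace =
  space :: "'a set"
  vadd :: "'a \<Rightarrow> 'a \<Rightarrow> 'a"
  smul :: "complex \<Rightarrow> 'a \<Rightarrow> 'a"
  vzero :: 'a
  vnorm :: "'a \<Rightarrow> real"

definition vsub :: "'a cnspace \<Rightarrow> 'a \<Rightarrow> 'a \<Rightarrow> 'a" where
  "vsub X x y = vadd X x (smul X (-1) y)"

definition complex_banach :: "'a cnspace \<Rightarrow> bool" where
  "complex_banach X \<longleftrightarrow>
     vzero X \<in> space X \<and>
     (\<forall>x\<in>space X. \<forall>y\<in>space X. vadd X x y \<in> space X) \<and>
     (\<forall>c. \<forall>x\<in>space X. smul X c x \<in> space X) \<and>
     (\<forall>x\<in>space X. \<forall>y\<in>space X. \<forall>z\<in>space X.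
         vadd X (vadd X x y) z = vadd X x (vadd X y z)) \<and>
     (\<forall>x\<in>space X. \<forall>y\<in>space X. vadd X x y = vadd X y x) \<and>
     (\<forall>x\<in>space X. vadd X x (vzero X) = x) \<and>
     (\<forall>x\<in>space X. vadd X x (smul X (-1) x) = vzero X) \<and>
     (\<forall>x\<in>space X. smul X 1 x = x) \<and>
     (\<forall>a b. \<forall>x\<in>space X. smul X a (smul X b x) = smul X (a * b) x) \<and>
     (\<forall>a b. \<forall>x\<in>space X. smul X (a + b) x = vadd X (smul X a x) (smul X b x)) \<and>
     (\<forall>a. \<forall>x\<in>space X. \<forall>y\<in>space X.
         smul X a (vadd X x y) = vadd X (smul X a x) (smul X a y)) \<and>
     (\<forall>x\<in>space X. 0 \<le> vnorm X x) \<and>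
     (\<forall>x\<in>space X. vnorm X x = 0 \<longleftrightarrow> x = vzero X) \<and>
     (\<forall>c. \<forall>x\<in>space X. vnorm X (smul X c x) = cmod c * vnorm X x) \<and>
     (\<forall>x\<in>space X. \<forall>y\<in>space X. vnorm X (vadd X x y) \<le> vnorm X x + vnorm X y) \<and>
     (\<forall>u :: nat \<Rightarrow> 'a. (\<forall>n. u n \<in> space X) \<longrightarrow>
        (\<forall>e>0. \<exists>N. \<forall>m\<ge>N. \<forall>n\<ge>N. vnorm X (vsub X (u m) (u n)) < e) \<longrightarrow>
        (\<exists>l\<in>space X. \<forall>e>0. \<exists>N. \<forall>n\<ge>N. vnorm X (vsub X (u n) l) < e))"

definition bounded_op :: "'a cnspace \<Rightarrow> 'b cnspace \<Rightarrow> ('a \<Rightarrow> 'b) \<Rightarrow> bool" where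
  "bounded_op X Y f \<longleftrightarrow>
     (\<forall>x\<in>space X. f x \<in> space Y) \<and>
     (\<forall>x\<in>space X. \<forall>y\<in>space X. f (vadd X x y) = vadd Y (f x) (f y)) \<and>
     (\<forall>c. \<forall>x\<in>space X. f (smul X c x) = smul Y c (f x)) \<and>
     (\<exists>C. \<forall>x\<in>space X. vnorm Y (f x) \<le> C * vnorm X x)"

definition invertible_op :: "'a cnspace \<Rightarrow> 'b cnspace \<Rightarrow> ('a \<Rightarrow> 'b) \<Rightarrow> bool" where
  "invertible_op X Y f \<longleftrightarrow> bounded_op X Y f \<and>
     (\<exists>g. bounded_op Y X g \<and> (\<forall>x\<in>space X. g (f x) = x) \<and> (\<forall>y\<in>space Y. f (g y) = y))"

definition dsum :: "'a cnspace \<Rightarrow> 'b cnspace \<Rightarrow> ('a \<times> 'b) cnspace" where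
  "dsum X Y = \<lparr> space = space X \<times> space Y,
     vadd = (\<lambda>(x1, y1) (x2, y2). (vadd X x1 x2, vadd Y y1 y2)),
     smul = (\<lambda>c (x, y). (smul X c x, smul Y c y)),
     vzero = (vzero X, vzero Y),
     vnorm = (\<lambda>(x, y). sqrt ((vnorm X x)\<^sup>2 + (vnorm Y y)\<^sup>2)) \<rparr>"

definition trivial_space :: "'a cnspace" where
  "trivial_space = \<lparr> space = {undefined}, vadd = (\<lambda>_ _. undefined),
     smul = (\<lambda>_ _. undefined), vzero = undefined, vnorm = (\<lambda>_. 0) \<rparr>"

definition lp_space :: "real \<Rightarrow> (nat \<Rightarrow> complex) cnspace" where
  "lp_space p = \<lparr> space = {x. summable (\<lambda>n. cmod (x n) powr p)},
     vadd = (\<lambda>x y n. x n + y n),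
     smul = (\<lambda>c x n. c * x n),
     vzero = (\<lambda>n. 0),
     vnorm = (\<lambda>x. (\<Sum>n. cmod (x n) powr p) powr (1 / p)) \<rparr>"

text \<open>T in B(X), S in B(Y) satisfy [T 0; 0 id_X'] = E [S 0; 0 id_Y'] F
  for the given extension spaces X', Y'.\<close>

definition equiv_ext_with ::
  "'a cnspace \<Rightarrow> 'b cnspace \<Rightarrow> 'c cnspace \<Rightarrow> 'd cnspace
     \<Rightarrow> ('a \<Rightarrow> 'a) \<Rightarrow> ('b \<Rightarrow> 'b) \<Rightarrow> bool" where
  "equiv_ext_with X Y X' Y' T S \<longleftrightarrow>
     (\<exists>E F. invertible_op (dsum Y Y') (dsum X X') E \<and>
            invertible_op (dsum X X') (dsum Y Y') F \<and>
            (\<forall>z\<in>space (dsum X X').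
               (T (fst z), snd z) = E ((\<lambda>(y, y'). (S y, y')) (F z))))"

text \<open>Equivalence after extension, with the extension spaces X', Y' ranging
  over all complex Banach spaces carried by the types 'c and 'd.\<close>

definition equiv_after_ext ::
  "'c itself \<Rightarrow> 'd itself \<Rightarrow> 'a cnspace \<Rightarrow> 'b cnspace
     \<Rightarrow> ('a \<Rightarrow> 'a) \<Rightarrow> ('b \<Rightarrow> 'b) \<Rightarrow> bool" where
  "equiv_after_ext _ _ X Y T S \<longleftrightarrow>
     (\<exists>(X' :: 'c cnspace) (Y' :: 'd cnspace).
        complex_banach X' \<and> complex_banach Y' \<and> equiv_ext_with X Y X' Y' T S)"

definition equiv_after_one_sided_ext ::
  "'c itself \<Rightarrow> 'a cnspace \<Rightarrow> 'b cnspace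
     \<Rightarrow> ('a \<Rightarrow> 'a) \<Rightarrow> ('b \<Rightarrow> 'b) \<Rightarrow> bool" where
  "equiv_after_one_sided_ext _ X Y T S \<longleftrightarrow>
     (\<exists>X' :: 'c cnspace. complex_banach X' \<and>
         equiv_ext_with X Y X' (trivial_space :: 'c cnspace) T S) \<or>
     (\<exists>Y' :: 'c cnspace. complex_banach Y' \<and>
         equiv_ext_with X Y (trivial_space :: 'c cnspace) Y' T S)"

end

theory Submission
  imports Defs "HOL-Analysis.Convex" "HOL-Analysis.Function_Metric" "HOL-Analysis.Topology_Euclidean_Space"
begin

text \<open>Two invertible operators \<open>T\<close> on \<open>X\<close> and \<open>S\<close> on \<open>Y\<close> always become equivalent once \<open>T\<close> is
  extended by \<open>id\<^sub>Y\<close> and \<open>S\<close> by \<open>id\<^sub>X\<close>. If instead one of the extensions is trivial, the inverse of the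
  operator \<open>E\<close> (or \<open>F\<close>), restricted to \<open>\<ell>\<^sup>p \<oplus> 0\<close> (or \<open>\<ell>\<^sup>q \<oplus> 0\<close>), is an isomorphic embedding of \<open>\<ell>\<^sup>p\<close> into \<open>\<ell>\<^sup>q\<close> (or
  the other way round). Such an embedding \<open>A : \<ell>\<^sup>r \<rightarrow> \<ell>\<^sup>s\<close> with \<open>r \<noteq> s\<close> cannot exist: it maps suitable
  differences \<open>z\<^sub>k\<close> of unit vectors, which are disjointly supported and of norm \<open>2\<^sup>1\<^sup>/\<^sup>r\<close>, to a seminormalised
  coordinatewise null sequence. A gliding hump argument makes a subsequence of \<open>A z\<^sub>k\<close> behave like
  disjointly supported blocks, so \<open>\<parallel>A (z\<^sub>k\<^sub>1 + \<dots> + z\<^sub>k\<^sub>n)\<parallel>\<close> grows like \<open>n\<^sup>1\<^sup>/\<^sup>s\<close> while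
  \<open>\<parallel>z\<^sub>k\<^sub>1 + \<dots> + z\<^sub>k\<^sub>n\<parallel> = (2n)\<^sup>1\<^sup>/\<^sup>r\<close>.\<close>

section \<open>The spaces \<open>\<ell>\<^sup>s\<close>\<close>

definition lp_set :: "real \<Rightarrow> (nat \<Rightarrow> complex) set" where
  "lp_set s = {x. summable (\<lambda>n. cmod (x n) powr s)}"

definition lp_sum :: "real \<Rightarrow> (nat \<Rightarrow> complex) \<Rightarrow> real" where
  "lp_sum s x = (\<Sum>n. cmod (x n) powr s)"

definition lp_norm :: "real \<Rightarrow> (nat \<Rightarrow> complex) \<Rightarrow> real" where
  "lp_norm s x = lp_sum s x powr (1 / s)"

lemma lp_space_simps:
  "space (lp_space s) = lp_set s" "vnorm (lp_space s) = lp_norm s"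
  "vadd (lp_space s) = (\<lambda>x y n. x n + y n)" "smul (lp_space s) = (\<lambda>c x n. c * x n)"
  "vzero (lp_space s) = (\<lambda>n. 0)"
  by (auto simp: lp_space_def lp_set_def lp_norm_def lp_sum_def fun_eq_iff)

lemma lp_sum_nonneg: "x \<in> lp_set s \<Longrightarrow> 0 \<le> lp_sum s x"
  unfolding lp_sum_def lp_set_def by (auto intro!: suminf_nonneg)

lemma lp_norm_nonneg: "0 \<le> lp_norm s x"
  unfolding lp_norm_def by simp

lemma lp_norm_powr: "x \<in> lp_set s \<Longrightarrow> 0 < s \<Longrightarrow> lp_norm s x powr s = lp_sum s x"
  unfolding lp_norm_def using lp_sum_nonneg[of x s] by (simp add: powr_powr)

lemma lp_norm_leI:
  assumes "lp_sum s x \<le> K powr s" "x \<in> lp_set s" "0 < s" "0 \<le> K"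
  shows "lp_norm s x \<le> K"
proof -
  have "lp_norm s x \<le> (K powr s) powr (1/s)"
    unfolding lp_norm_def using assms lp_sum_nonneg by (intro powr_mono2) auto
  also have "\<dots> = K" using assms by (simp add: powr_powr)
  finally show ?thesis .
qed

lemma lp_norm_geI:
  assumes "K powr s \<le> lp_sum s x" "x \<in> lp_set s" "0 < s" "0 \<le> K"
  shows "K \<le> lp_norm s x"
proof -
  have "(K powr s) powr (1/s) \<le> lp_norm s x"
    unfolding lp_norm_def using assms by (intro powr_mono2) auto
  also have "(K powr s) powr (1/s) = K" using assms by (simp add: powr_powr)
  finally show ?thesis .
qed

lemma lp_norm_eq_0_iff:
  assumes "x \<in> lp_set s"
  shows "lp_norm s x = 0 \<longleftrightarrow> x = (\<lambda>n. 0)"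
proof -
  have "lp_sum s x = 0 \<longleftrightarrow> x = (\<lambda>n. 0)"
    unfolding lp_sum_def using assms by (subst suminf_eq_zero_iff) (auto simp: lp_set_def fun_eq_iff)
  then show ?thesis unfolding lp_norm_def by simp
qed

lemma norm_le_lp_norm:
  assumes "x \<in> lp_set s" "0 < s"
  shows "cmod (x m) \<le> lp_norm s x"
proof -
  have "cmod (x m) powr s \<le> lp_sum s x"
    using assms sum_le_suminf[of "\<lambda>n. cmod (x n) powr s" "{m}"]
    by (auto simp: lp_sum_def lp_set_def)
  then show ?thesis using assms by (intro lp_norm_geI) auto
qed

lemma lp_set_zero [simp]: "(\<lambda>n. 0) \<in> lp_set s"
  unfolding lp_set_def by simp

lemma lp_sum_finite_support:
  assumes "\<And>n. M \<le> n \<Longrightarrow> x n = 0"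
  shows "x \<in> lp_set s" "lp_sum s x = (\<Sum>n<M. cmod (x n) powr s)"
proof -
  have z: "\<And>n. n \<notin> {..<M} \<Longrightarrow> cmod (x n) powr s = 0" using assms by auto
  show "x \<in> lp_set s"
    unfolding lp_set_def using summable_finite[of "{..<M}", OF _ z] by auto
  show "lp_sum s x = (\<Sum>n<M. cmod (x n) powr s)"
    unfolding lp_sum_def using suminf_finite[of "{..<M}", OF _ z] by auto
qed

lemma lp_smul:
  assumes "x \<in> lp_set s" "0 < s"
  shows "(\<lambda>n. c * x n) \<in> lp_set s" "lp_sum s (\<lambda>n. c * x n) = cmod c powr s * lp_sum s x"
    "lp_norm s (\<lambda>n. c * x n) = cmod c * lp_norm s x"
proof -
  have e: "cmod (c * x n) powr s = cmod c powr s * cmod (x n) powr s" for n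
    by (simp add: norm_mult powr_mult)
  show "(\<lambda>n. c * x n) \<in> lp_set s"
    using assms unfolding lp_set_def by (simp add: e summable_mult)
  show sum: "lp_sum s (\<lambda>n. c * x n) = cmod c powr s * lp_sum s x"
    using assms unfolding lp_set_def lp_sum_def e by (simp add: suminf_mult)
  show "lp_norm s (\<lambda>n. c * x n) = cmod c * lp_norm s x"
    unfolding lp_norm_def sum using assms lp_sum_nonneg[OF assms(1)]
    by (simp add: powr_mult powr_powr)
qed

lemma lp_restrict:
  assumes "x \<in> lp_set s" "0 < s"
  shows "(\<lambda>n. if Q n then x n else 0) \<in> lp_set s"
    "lp_norm s (\<lambda>n. if Q n then x n else 0) \<le> lp_norm s x"
proof -
  have le: "cmod (if Q n then x n else 0) powr s \<le> cmod (x n) powr s" for n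
    by (cases "Q n") simp_all
  have sx: "summable (\<lambda>n. cmod (x n) powr s)" using assms unfolding lp_set_def by auto
  show in_lp: "(\<lambda>n. if Q n then x n else 0) \<in> lp_set s"
    unfolding lp_set_def by (rule CollectI, rule summable_comparison_test'[OF sx, where N=0]) (simp add: le)
  have "lp_sum s (\<lambda>n. if Q n then x n else 0) \<le> lp_sum s x"
    unfolding lp_sum_def using in_lp sx unfolding lp_set_def by (intro suminf_le le) auto
  then show "lp_norm s (\<lambda>n. if Q n then x n else 0) \<le> lp_norm s x"
    unfolding lp_norm_def using in_lp assms lp_sum_nonneg[OF in_lp] by (intro powr_mono2) auto
qed

lemma lp_add_disjoint:
  assumes "x \<in> lp_set s" "y \<in> lp_set s" "\<And>m. x m = 0 \<or> y m = 0"
  shows "(\<lambda>n. x n + y n) \<in> lp_set s" "lp_sum s (\<lambda>n. x n + y n) = lp_sum s x + lp_sum s y"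
proof -
  have "cmod (x n + y n) powr s = cmod (x n) powr s + cmod (y n) powr s" for n
    using assms(3)[of n] by (cases "x n = 0") simp_all
  then show "(\<lambda>n. x n + y n) \<in> lp_set s" "lp_sum s (\<lambda>n. x n + y n) = lp_sum s x + lp_sum s y"
    using assms unfolding lp_sum_def lp_set_def by (simp_all add: suminf_add summable_add)
qed

lemma lp_sum_disjoint:
  fixes u :: "nat \<Rightarrow> nat \<Rightarrow> complex"
  assumes u: "\<And>i. u i \<in> lp_set s" and disj: "\<And>i j m. i \<noteq> j \<Longrightarrow> u i m = 0 \<or> u j m = 0"
  shows "(\<lambda>m. \<Sum>i<n. u i m) \<in> lp_set s" "lp_sum s (\<lambda>m. \<Sum>i<n. u i m) = (\<Sum>i<n. lp_sum s (u i))"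
proof (induction n)
  case 0
  show "(\<lambda>m. \<Sum>i<0. u i m) \<in> lp_set s" "lp_sum s (\<lambda>m. \<Sum>i<0. u i m) = (\<Sum>i<0. lp_sum s (u i))"
    by (simp_all add: lp_set_def lp_sum_def)
next
  case (Suc n)
  have "(\<Sum>i<n. u i m) = 0 \<or> u n m = 0" for m
    using disj[of _ n m] by (cases "u n m = 0") auto
  from lp_add_disjoint[OF Suc.IH(1) u this]
  show "(\<lambda>m. \<Sum>i<Suc n. u i m) \<in> lp_set s"
    "lp_sum s (\<lambda>m. \<Sum>i<Suc n. u i m) = (\<Sum>i<Suc n. lp_sum s (u i))"
    using Suc.IH(2) by simp_all
qed

lemma lp_norm_sum_disjoint:
  fixes u :: "nat \<Rightarrow> nat \<Rightarrow> complex"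
  assumes s: "0 < s" and u: "\<And>i. u i \<in> lp_set s"
    and disj: "\<And>i j m. i \<noteq> j \<Longrightarrow> u i m = 0 \<or> u j m = 0"
    and a: "0 \<le> a" and bounds: "\<And>i. a \<le> lp_norm s (u i)" "\<And>i. lp_norm s (u i) \<le> b"
  shows "real n powr (1/s) * a \<le> lp_norm s (\<lambda>m. \<Sum>i<n. u i m)"
    "lp_norm s (\<lambda>m. \<Sum>i<n. u i m) \<le> real n powr (1/s) * b"
proof -
  have scale: "(real n powr (1/s) * c) powr s = real n * c powr s" if "0 \<le> c" for c
    using s that by (simp add: powr_mult powr_powr)
  have sum_u: "lp_sum s (\<lambda>m. \<Sum>i<n. u i m) = (\<Sum>i<n. lp_norm s (u i) powr s)"
    using lp_sum_disjoint(2)[OF u disj] lp_norm_powr[OF u s] by simp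
  have "(\<Sum>i<n. a powr s) \<le> (\<Sum>i<n. lp_norm s (u i) powr s)"
    using a bounds s by (intro sum_mono powr_mono2) auto
  then show "real n powr (1/s) * a \<le> lp_norm s (\<lambda>m. \<Sum>i<n. u i m)"
    using lp_sum_disjoint(1)[OF u disj] s a by (intro lp_norm_geI) (auto simp: scale sum_u)
  have b: "0 \<le> b" using bounds(2)[of 0] lp_norm_nonneg[of s "u 0"] by linarith
  have "(\<Sum>i<n. lp_norm s (u i) powr s) \<le> (\<Sum>i<n. b powr s)"
    using bounds s by (intro sum_mono powr_mono2) (auto simp: lp_norm_nonneg)
  then show "lp_norm s (\<lambda>m. \<Sum>i<n. u i m) \<le> real n powr (1/s) * b"
    using lp_sum_disjoint(1)[OF u disj] s b by (intro lp_norm_leI) (auto simp: scale sum_u)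
qed

lemma powr_convex_combination:
  fixes a b t p :: real
  assumes "0 \<le> a" "0 \<le> b" "0 \<le> t" "t \<le> 1" "1 \<le> p"
  shows "(t * a + (1 - t) * b) powr p \<le> t * a powr p + (1 - t) * b powr p"
proof -
  have below_id: "c powr p \<le> c" if "0 \<le> c" "c \<le> 1" for c :: real
  proof (cases "c = 0")
    case False
    then have "c powr p \<le> c powr 1" using that assms by (intro powr_mono') auto
    then show ?thesis using False that by simp
  qed simp
  consider "a = 0" | "b = 0" | "0 < a" "0 < b" using assms by linarith
  then show ?thesis
  proof cases
    case 1
    have "((1 - t) * b) powr p = (1 - t) powr p * b powr p" using assms by (simp add: powr_mult)
    also have "\<dots> \<le> (1 - t) * b powr p" using below_id[of "1 - t"] assms by (intro mult_right_mono) auto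
    finally show ?thesis using 1 assms by simp
  next
    case 2
    have "(t * a) powr p = t powr p * a powr p" using assms by (simp add: powr_mult)
    also have "\<dots> \<le> t * a powr p" using below_id[of t] assms by (intro mult_right_mono) auto
    finally show ?thesis using 2 assms by simp
  next
    case 3
    then show ?thesis using powr_convex[OF assms(5)] assms unfolding convex_on_def
      by (auto elim!: allE[of _ a] allE[of _ b] allE[of _ t])
  qed
qed

text \<open>For nonzero \<open>x\<close>, \<open>y\<close> write \<open>x + y\<close> as a multiple of the convex
  combination \<open>t (x/\<parallel>x\<parallel>) + (1 - t) (y/\<parallel>y\<parallel>)\<close> with \<open>t = \<parallel>x\<parallel>/(\<parallel>x\<parallel> + \<parallel>y\<parallel>)\<close> and apply convexity of
  \<open>c \<mapsto> c\<^sup>s\<close> coordinatewise.\<close>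

lemma lp_minkowski:
  assumes s: "1 \<le> s" and x: "x \<in> lp_set s" and y: "y \<in> lp_set s"
  shows "(\<lambda>n. x n + y n) \<in> lp_set s \<and> lp_norm s (\<lambda>n. x n + y n) \<le> lp_norm s x + lp_norm s y"
proof (cases "lp_norm s x = 0 \<or> lp_norm s y = 0")
  case True
  then show ?thesis
    using x y lp_norm_eq_0_iff[OF x] lp_norm_eq_0_iff[OF y] by (auto simp: lp_norm_nonneg)
next
  case False
  define A where "A = lp_norm s x"
  define B where "B = lp_norm s y"
  have A: "A > 0" using False lp_norm_nonneg[of s x] unfolding A_def by linarith
  have B: "B > 0" using False lp_norm_nonneg[of s y] unfolding B_def by linarith
  define t where "t = A / (A + B)"
  have t: "0 \<le> t" "t \<le> 1" using A B unfolding t_def by auto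
  have t1: "1 - t = B / (A + B)" using A B unfolding t_def by (simp add: field_simps)
  define g where "g n = (A + B) powr s * ((t / A powr s) * cmod (x n) powr s
      + ((1 - t) / B powr s) * cmod (y n) powr s)" for n
  have pointwise: "cmod (x n + y n) powr s \<le> g n" for n
  proof -
    have "cmod (x n + y n) \<le> cmod (x n) + cmod (y n)" by (rule norm_triangle_ineq)
    also have "\<dots> = (A + B) * (t * (cmod (x n) / A) + (1 - t) * (cmod (y n) / B))"
    proof -
      have "(A + B) * (t * (cmod (x n) / A)) = cmod (x n)" unfolding t_def using A B by simp
      moreover have "(A + B) * ((1 - t) * (cmod (y n) / B)) = cmod (y n)" unfolding t1 using A B by simp
      ultimately show ?thesis by (simp add: distrib_left)
    qed
    finally have "cmod (x n + y n) powr s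
        \<le> ((A + B) * (t * (cmod (x n) / A) + (1 - t) * (cmod (y n) / B))) powr s"
      using s by (intro powr_mono2) auto
    also have "\<dots> = (A + B) powr s * (t * (cmod (x n) / A) + (1 - t) * (cmod (y n) / B)) powr s"
      using A B t by (simp add: powr_mult)
    also have "\<dots> \<le> (A + B) powr s * (t * (cmod (x n) / A) powr s + (1 - t) * (cmod (y n) / B) powr s)"
      using A B t s by (intro mult_left_mono powr_convex_combination) auto
    also have "\<dots> = g n" unfolding g_def using A B by (simp add: powr_divide)
    finally show ?thesis .
  qed
  have sx: "summable (\<lambda>n. cmod (x n) powr s)" and sy: "summable (\<lambda>n. cmod (y n) powr s)"
    using x y unfolding lp_set_def by auto
  have "lp_sum s x = A powr s" "lp_sum s y = B powr s"
    unfolding A_def B_def using lp_norm_powr x y s by auto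
  moreover have "g sums ((A + B) powr s * ((t / A powr s) * lp_sum s x + ((1 - t) / B powr s) * lp_sum s y))"
    unfolding g_def lp_sum_def by (intro sums_mult sums_add sx sy summable_sums)
  ultimately have "g sums ((A + B) powr s)"
    using A B by simp
  then have g: "summable g" "suminf g = (A + B) powr s" by (simp_all add: sums_iff)
  have sxy: "summable (\<lambda>n. cmod (x n + y n) powr s)"
    by (rule summable_comparison_test[OF _ g(1)]) (use pointwise in auto)
  have "lp_sum s (\<lambda>n. x n + y n) \<le> (A + B) powr s"
    unfolding lp_sum_def g(2)[symmetric] by (rule suminf_le[OF _ sxy g(1)]) (use pointwise in auto)
  then have "lp_norm s (\<lambda>n. x n + y n) \<le> A + B"
    using sxy A B s by (intro lp_norm_leI) (auto simp: lp_set_def)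
  then show ?thesis using sxy unfolding A_def B_def lp_set_def by auto
qed

lemma lp_diff:
  assumes "1 \<le> s" "x \<in> lp_set s" "y \<in> lp_set s"
  shows "(\<lambda>n. x n - y n) \<in> lp_set s" "lp_norm s (\<lambda>n. x n - y n) \<le> lp_norm s x + lp_norm s y"
  using lp_minkowski[OF assms(1,2) lp_smul(1)[OF assms(3), of "-1"]] lp_smul(3)[OF assms(3), of "-1"] assms
  by auto

lemma lp_norm_sum_le:
  fixes f :: "nat \<Rightarrow> nat \<Rightarrow> complex"
  assumes "1 \<le> s" "\<And>i. i < k \<Longrightarrow> f i \<in> lp_set s"
  shows "(\<lambda>m. \<Sum>i<k. f i m) \<in> lp_set s \<and> lp_norm s (\<lambda>m. \<Sum>i<k. f i m) \<le> (\<Sum>i<k. lp_norm s (f i))"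
  using assms(2)
proof (induction k)
  case 0
  then show ?case by (simp add: lp_set_def lp_norm_def lp_sum_def)
next
  case (Suc k)
  then have "f k \<in> lp_set s" "(\<lambda>m. \<Sum>i<k. f i m) \<in> lp_set s"
    "lp_norm s (\<lambda>m. \<Sum>i<k. f i m) \<le> (\<Sum>i<k. lp_norm s (f i))" by auto
  with lp_minkowski[OF assms(1) this(2,1)] show ?case by auto
qed

lemma lp_norm_le_coordinatewise_limit:
  fixes y :: "nat \<Rightarrow> nat \<Rightarrow> complex"
  assumes s: "0 < s" and lim: "\<And>k. (\<lambda>n. y n k) \<longlonglongrightarrow> l k" and e: "0 \<le> e"
    and bound: "\<And>n. N \<le> n \<Longrightarrow> y n \<in> lp_set s \<and> lp_norm s (y n) \<le> e"
  shows "l \<in> lp_set s" "lp_norm s l \<le> e"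
proof -
  have partial: "(\<Sum>k<M. cmod (l k) powr s) \<le> e powr s" for M
  proof -
    have "(\<lambda>n. \<Sum>k<M. cmod (y n k) powr s) \<longlonglongrightarrow> (\<Sum>k<M. cmod (l k) powr s)"
      using s by (intro tendsto_sum tendsto_powr2 tendsto_norm tendsto_const lim) auto
    moreover have "(\<Sum>k<M. cmod (y n k) powr s) \<le> e powr s" if n: "N \<le> n" for n
    proof -
      have "(\<Sum>k<M. cmod (y n k) powr s) \<le> lp_sum s (y n)"
        unfolding lp_sum_def using bound[OF n] by (intro sum_le_suminf) (auto simp: lp_set_def)
      also have "\<dots> = lp_norm s (y n) powr s" using lp_norm_powr bound[OF n] s by simp
      also have "\<dots> \<le> e powr s" using bound[OF n] s by (intro powr_mono2) (auto simp: lp_norm_nonneg)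
      finally show ?thesis .
    qed
    ultimately show ?thesis by (intro LIMSEQ_le_const2) auto
  qed
  have sm: "summable (\<lambda>k. cmod (l k) powr s)"
    by (rule bounded_imp_summable[of _ "e powr s"])
      (use partial[of "Suc _"] in \<open>auto simp: lessThan_Suc_atMost\<close>)
  then show l: "l \<in> lp_set s" unfolding lp_set_def by simp
  have "lp_sum s l \<le> e powr s" unfolding lp_sum_def by (rule suminf_le_const[OF sm partial])
  then show "lp_norm s l \<le> e" using l s e by (intro lp_norm_leI)
qed

lemma lp_set_complete:
  fixes u :: "nat \<Rightarrow> nat \<Rightarrow> complex"
  assumes s: "1 \<le> s" and u: "\<And>n. u n \<in> lp_set s"
    and Cauchy: "\<And>e. 0 < e \<Longrightarrow> \<exists>N. \<forall>m\<ge>N. \<forall>n\<ge>N. lp_norm s (\<lambda>k. u m k - u n k) < e"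
  shows "\<exists>l\<in>lp_set s. \<forall>e>0. \<exists>N. \<forall>n\<ge>N. lp_norm s (\<lambda>k. u n k - l k) < e"
proof -
  have s0: "0 < s" using s by simp
  have du: "(\<lambda>k. u m k - u n k) \<in> lp_set s" for m n using lp_diff(1)[OF s u u] .
  have "Cauchy (\<lambda>n. u n k)" for k
  proof (rule CauchyI)
    fix e :: real assume "0 < e"
    then obtain N where N: "\<forall>m\<ge>N. \<forall>n\<ge>N. lp_norm s (\<lambda>k. u m k - u n k) < e" using Cauchy by blast
    show "\<exists>M. \<forall>m\<ge>M. \<forall>n\<ge>M. norm (u m k - u n k) < e"
    proof (intro exI[of _ N] allI impI)
      fix m n assume "N \<le> m" "N \<le> n"
      then show "norm (u m k - u n k) < e"
        using N norm_le_lp_norm[OF du[of m n] s0, of k] by force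
    qed
  qed
  define l where "l k = lim (\<lambda>n. u n k)" for k
  have lim: "(\<lambda>n. u n k) \<longlonglongrightarrow> l k" for k
    unfolding l_def using \<open>Cauchy (\<lambda>n. u n k)\<close> by (simp add: Cauchy_convergent_iff convergent_LIMSEQ_iff)
  have close: "\<exists>N. \<forall>m\<ge>N. (\<lambda>k. u m k - l k) \<in> lp_set s \<and> lp_norm s (\<lambda>k. u m k - l k) < e"
    if e: "0 < e" for e
  proof -
    obtain N where N: "\<forall>m\<ge>N. \<forall>n\<ge>N. lp_norm s (\<lambda>k. u m k - u n k) < e/2"
      using Cauchy[of "e/2"] e by auto
    have "(\<lambda>k. u m k - l k) \<in> lp_set s \<and> lp_norm s (\<lambda>k. u m k - l k) \<le> e/2" if "N \<le> m" for m
    proof -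
      have lim_m: "(\<lambda>n. u m k - u n k) \<longlonglongrightarrow> u m k - l k" for k by (intro tendsto_diff tendsto_const lim)
      have bound_m: "(\<lambda>k. u m k - u n k) \<in> lp_set s \<and> lp_norm s (\<lambda>k. u m k - u n k) \<le> e/2"
        if "N \<le> n" for n
        using du N \<open>N \<le> m\<close> that by (simp add: less_imp_le)
      have "0 \<le> e/2" using e by simp
      from lp_norm_le_coordinatewise_limit[where y="\<lambda>n k. u m k - u n k", OF s0 lim_m this bound_m]
      show ?thesis by simp
    qed
    then show ?thesis using e by (intro exI[of _ N]) force
  qed
  obtain N where "(\<lambda>k. u N k - l k) \<in> lp_set s" using close[of 1] by auto
  from lp_diff(1)[OF s u[of N] this] have "l \<in> lp_set s" by simp
  with close show ?thesis by (intro bexI[of _ l]) force+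
qed

lemma complex_banach_lp_space:
  assumes s: "1 \<le> s"
  shows "complex_banach (lp_space s)"
proof -
  have s0: "0 < s" using s by simp
  have vsub_eq: "vsub (lp_space s) = (\<lambda>x y k. x k - y k)"
    unfolding vsub_def lp_space_simps by (auto simp: fun_eq_iff)
  have "\<exists>l\<in>lp_set s. \<forall>e>0. \<exists>N. \<forall>n\<ge>N. lp_norm s (\<lambda>k. u n k - l k) < e"
    if "\<forall>n. u n \<in> lp_set s" "\<forall>e>0. \<exists>N. \<forall>m\<ge>N. \<forall>n\<ge>N. lp_norm s (\<lambda>k. u m k - u n k) < e"
    for u :: "nat \<Rightarrow> nat \<Rightarrow> complex"
    using lp_set_complete[OF s, of u] that by blast
  then show ?thesis
    unfolding complex_banach_def vsub_eq lp_space_simps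
    using lp_minkowski[OF s] lp_smul[OF _ s0] lp_norm_nonneg lp_norm_eq_0_iff
    by (auto simp: algebra_simps fun_eq_iff)
qed

section \<open>A gliding hump argument in \<open>\<ell>\<^sup>s\<close>\<close>

lemma lp_tail_tendsto_0:
  assumes x: "x \<in> lp_set s" and s: "0 < s"
  shows "(\<lambda>M. lp_norm s (\<lambda>n. if M \<le> n then x n else 0)) \<longlonglongrightarrow> 0"
proof -
  have sx: "summable (\<lambda>n. cmod (x n) powr s)" using x unfolding lp_set_def by simp
  have tail: "lp_sum s (\<lambda>n. if M \<le> n then x n else 0) = (\<Sum>i. cmod (x (i + M)) powr s)" for M
  proof -
    have "summable (\<lambda>n. cmod (if M \<le> n then x n else 0) powr s)"
      using lp_restrict(1)[OF x s] unfolding lp_set_def by simp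
    from suminf_split_initial_segment[OF this, of M] show ?thesis
      unfolding lp_sum_def by simp
  qed
  have "(\<lambda>M. \<Sum>i. cmod (x (i + M)) powr s) \<longlonglongrightarrow> 0"
    using suminf_exist_split[OF _ sx] by (subst lim_sequentially) (auto simp: dist_norm)
  then show ?thesis
    unfolding lp_norm_def tail using s
    by (intro tendsto_zero_powrI[where b="1/s"])
      (auto intro!: always_eventually suminf_nonneg summable_ignore_initial_segment sx)
qed

lemma lp_head_tendsto_0:
  fixes w :: "nat \<Rightarrow> nat \<Rightarrow> complex"
  assumes null: "\<And>j. (\<lambda>k. w k j) \<longlonglongrightarrow> 0" and s: "0 < s"
  shows "(\<lambda>k. lp_norm s (\<lambda>n. if n < m then w k n else 0)) \<longlonglongrightarrow> 0"
proof -
  have head: "lp_sum s (\<lambda>n. if n < m then w k n else 0) = (\<Sum>n<m. cmod (w k n) powr s)" for k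
    using lp_sum_finite_support(2)[of m "\<lambda>n. if n < m then w k n else 0" s] by simp
  have "(\<lambda>k. \<Sum>n<m. cmod (w k n) powr s) \<longlonglongrightarrow> (\<Sum>n<m. 0)"
    using s by (intro tendsto_sum tendsto_zero_powrI tendsto_norm_zero null) auto
  then show ?thesis
    unfolding lp_norm_def head using s
    by (intro tendsto_zero_powrI[where b="1/s"]) (auto intro!: always_eventually sum_nonneg)
qed

text \<open>Choose each term far enough out that it is small below the previous interval, then cut off
  its small tail.\<close>

lemma gliding_hump_intervals:
  fixes w :: "nat \<Rightarrow> nat \<Rightarrow> complex" and \<epsilon> :: "nat \<Rightarrow> real"
  assumes s: "0 < s" and w: "\<And>k. w k \<in> lp_set s" and null: "\<And>j. (\<lambda>k. w k j) \<longlonglongrightarrow> 0"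
    and \<epsilon>: "\<And>i. 0 < \<epsilon> i"
  obtains kk lo hi where "strict_mono kk" "\<And>i. lo i < hi i" "\<And>i. lo (Suc i) = hi i"
    "\<And>i. lp_norm s (\<lambda>n. if n < lo i then w (kk i) n else 0) \<le> \<epsilon> i"
    "\<And>i. lp_norm s (\<lambda>n. if hi i \<le> n then w (kk i) n else 0) \<le> \<epsilon> i"
proof -
  define head where "head a k = (\<lambda>n. if n < a then w k n else 0)" for a k
  define tail where "tail b k = (\<lambda>n. if b \<le> n then w k n else 0)" for b k
  define good where "good i = (\<lambda>(k, a, b). a < b \<and> lp_norm s (head a k) \<le> \<epsilon> i
      \<and> lp_norm s (tail b k) \<le> \<epsilon> i)" for i
  have late_tail: "\<exists>b>a. lp_norm s (tail b k) \<le> \<epsilon> i" for a k i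
  proof -
    have "\<forall>\<^sub>F b in sequentially. a < b \<and> lp_norm s (tail b k) < \<epsilon> i"
      using eventually_gt_at_top[of a] order_tendstoD(2)[OF lp_tail_tendsto_0[OF w s] \<epsilon>]
      unfolding tail_def by (rule eventually_conj)
    then show ?thesis unfolding eventually_sequentially by (meson less_imp_le order_refl)
  qed
  have late_head: "\<exists>k'>k. lp_norm s (head a k') \<le> \<epsilon> i" for a k i
  proof -
    have "\<forall>\<^sub>F k' in sequentially. k < k' \<and> lp_norm s (head a k') < \<epsilon> i"
      using eventually_gt_at_top[of k] order_tendstoD(2)[OF lp_head_tendsto_0[OF null s] \<epsilon>]
      unfolding head_def by (rule eventually_conj)
    then show ?thesis unfolding eventually_sequentially by (meson less_imp_le order_refl)
  qed
  have "\<exists>x. good 0 x"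
  proof -
    obtain b where "0 < b" "lp_norm s (tail b 0) \<le> \<epsilon> 0" using late_tail by blast
    moreover have "lp_norm s (head 0 0) = 0" by (simp add: head_def lp_norm_def lp_sum_def)
    ultimately have "good 0 (0, 0, b)" unfolding good_def using \<epsilon>[of 0] by simp
    then show ?thesis ..
  qed
  moreover have "\<exists>y. good (Suc i) y \<and> fst x < fst y \<and> fst (snd y) = snd (snd x)" for x i
  proof -
    obtain k' where k': "fst x < k'" "lp_norm s (head (snd (snd x)) k') \<le> \<epsilon> (Suc i)"
      using late_head by blast
    obtain b' where "snd (snd x) < b'" "lp_norm s (tail b' k') \<le> \<epsilon> (Suc i)"
      using late_tail by blast
    with k' have "good (Suc i) (k', snd (snd x), b')" unfolding good_def by simp
    with k'(1) show ?thesis by force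
  qed
  ultimately obtain f where f: "\<And>i. good i (f i)" "\<And>i. fst (f i) < fst (f (Suc i))"
    "\<And>i. fst (snd (f (Suc i))) = snd (snd (f i))"
    using dependent_nat_choice[of good "\<lambda>i x y. fst x < fst y \<and> fst (snd y) = snd (snd x)"] by metis
  show ?thesis
  proof (rule that)
    show "strict_mono (\<lambda>i. fst (f i))" unfolding strict_mono_Suc_iff using f(2) by blast
    show "fst (snd (f (Suc i))) = snd (snd (f i))" for i by (rule f(3))
  qed (use f(1) in \<open>auto simp: good_def head_def tail_def case_prod_beta\<close>)
qed

lemma consecutive_intervals_ordered:
  fixes lo hi :: "nat \<Rightarrow> nat"
  assumes "\<And>i. lo i < hi i" "\<And>i. lo (Suc i) = hi i" and "i < j"
  shows "hi i \<le> lo j"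
  using assms(3)
proof (induction j)
  case (Suc j)
  then show ?case using assms(1,2)[of j] by (cases "i = j") auto
qed simp

lemma gliding_hump:
  fixes w :: "nat \<Rightarrow> nat \<Rightarrow> complex" and \<epsilon> :: "nat \<Rightarrow> real"
  assumes s: "1 \<le> s" and w: "\<And>k. w k \<in> lp_set s" and null: "\<And>j. (\<lambda>k. w k j) \<longlonglongrightarrow> 0"
    and \<epsilon>: "\<And>i. 0 < \<epsilon> i"
  obtains kk u where "strict_mono kk" "\<And>i. u i \<in> lp_set s" "\<And>i. lp_norm s (u i) \<le> lp_norm s (w (kk i))"
    "\<And>i j m. i \<noteq> j \<Longrightarrow> u i m = 0 \<or> u j m = 0" "\<And>i. lp_norm s (\<lambda>n. w (kk i) n - u i n) \<le> \<epsilon> i"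
proof -
  have s0: "0 < s" using s by simp
  obtain kk lo hi where kk: "strict_mono kk" and lo_hi: "\<And>i. lo i < hi i" "\<And>i. lo (Suc i) = hi i"
    and head: "\<And>i. lp_norm s (\<lambda>n. if n < lo i then w (kk i) n else 0) \<le> \<epsilon> i / 2"
    and tail: "\<And>i. lp_norm s (\<lambda>n. if hi i \<le> n then w (kk i) n else 0) \<le> \<epsilon> i / 2"
    using gliding_hump_intervals[where \<epsilon>="\<lambda>i. \<epsilon> i / 2", OF s0 w null half_gt_zero[OF \<epsilon>]] by blast
  define u where "u i = (\<lambda>n. if lo i \<le> n \<and> n < hi i then w (kk i) n else 0)" for i
  show ?thesis
  proof (rule that[OF kk])
    show "u i \<in> lp_set s" "lp_norm s (u i) \<le> lp_norm s (w (kk i))" for i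
      unfolding u_def by (rule lp_restrict(1)[OF w s0], rule lp_restrict(2)[OF w s0])
    show "u i m = 0 \<or> u j m = 0" if "i \<noteq> j" for i j m
      using that consecutive_intervals_ordered[of lo hi, OF lo_hi, of i j]
        consecutive_intervals_ordered[of lo hi, OF lo_hi, of j i]
      unfolding u_def by (cases "i < j") auto
    show "lp_norm s (\<lambda>n. w (kk i) n - u i n) \<le> \<epsilon> i" for i
    proof -
      have "(\<lambda>n. w (kk i) n - u i n)
          = (\<lambda>n. (if n < lo i then w (kk i) n else 0) + (if hi i \<le> n then w (kk i) n else 0))"
        using lo_hi(1)[of i] by (auto simp: u_def fun_eq_iff)
      moreover have "lp_norm s (\<lambda>n. (if n < lo i then w (kk i) n else 0) + (if hi i \<le> n then w (kk i) n else 0))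
          \<le> lp_norm s (\<lambda>n. if n < lo i then w (kk i) n else 0) + lp_norm s (\<lambda>n. if hi i \<le> n then w (kk i) n else 0)"
        using lp_minkowski[OF s lp_restrict(1)[OF w[of "kk i"] s0, of "\<lambda>n. n < lo i"]
            lp_restrict(1)[OF w[of "kk i"] s0, of "\<lambda>n. hi i \<le> n"]] by blast
      ultimately show ?thesis using head[of i] tail[of i] by simp
    qed
  qed
qed

lemma geometric_error_sequence:
  fixes c :: real
  assumes "0 < c"
  obtains \<epsilon> :: "nat \<Rightarrow> real" where "\<And>i. 0 < \<epsilon> i" "\<And>i. \<epsilon> i \<le> c" "\<And>n. (\<Sum>i<n. \<epsilon> i) \<le> c"
proof (rule that[of "\<lambda>i. c / 2 ^ Suc i"])
  show "0 < c / 2 ^ Suc i" for i using assms by simp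
  show "c / 2 ^ Suc i \<le> c" for i
    using assms one_le_power[of "2::real" "Suc i"] by (simp add: divide_le_eq del: power_Suc)
  show "(\<Sum>i<n. c / 2 ^ Suc i) \<le> c" for n
  proof -
    have "(\<Sum>i<n. c / 2 ^ Suc i) = c / 2 * (\<Sum>i<n. (1/2::real) ^ i)"
      unfolding sum_distrib_left by (simp add: power_divide)
    also have "(\<Sum>i<n. (1/2::real) ^ i) \<le> (\<Sum>i. (1/2) ^ i)"
      by (intro sum_le_suminf summable_geometric) auto
    also have "(\<Sum>i. (1/2::real) ^ i) = 2" using suminf_geometric[of "1/2::real"] by simp
    finally show ?thesis using assms by (auto simp: mult_left_mono)
  qed
qed

lemma lp_norm_sum_close:
  fixes w u :: "nat \<Rightarrow> nat \<Rightarrow> complex"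
  assumes s: "1 \<le> s" and w: "\<And>i. w i \<in> lp_set s" and u: "\<And>i. u i \<in> lp_set s"
    and close: "\<And>i. lp_norm s (\<lambda>m. w i m - u i m) \<le> \<epsilon> i"
  shows "\<bar>lp_norm s (\<lambda>m. \<Sum>i<n. w i m) - lp_norm s (\<lambda>m. \<Sum>i<n. u i m)\<bar> \<le> (\<Sum>i<n. \<epsilon> i)"
proof -
  define R where "R = (\<lambda>m. \<Sum>i<n. w i m - u i m)"
  have "R \<in> lp_set s \<and> lp_norm s R \<le> (\<Sum>i<n. lp_norm s (\<lambda>m. w i m - u i m))"
    unfolding R_def by (rule lp_norm_sum_le[OF s lp_diff(1)[OF s w u]])
  moreover have "(\<Sum>i<n. lp_norm s (\<lambda>m. w i m - u i m)) \<le> (\<Sum>i<n. \<epsilon> i)"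
    using close by (intro sum_mono)
  ultimately have R: "R \<in> lp_set s" "lp_norm s R \<le> (\<Sum>i<n. \<epsilon> i)" by auto
  have W: "(\<lambda>m. \<Sum>i<n. w i m) \<in> lp_set s" and U: "(\<lambda>m. \<Sum>i<n. u i m) \<in> lp_set s"
    using lp_norm_sum_le[OF s] w u by blast+
  have "(\<lambda>m. (\<Sum>i<n. w i m) - R m) = (\<lambda>m. \<Sum>i<n. u i m)"
    unfolding R_def by (simp add: sum_subtractf)
  then have "lp_norm s (\<lambda>m. \<Sum>i<n. u i m) \<le> lp_norm s (\<lambda>m. \<Sum>i<n. w i m) + lp_norm s R"
    using lp_diff(2)[OF s W R(1)] by simp
  moreover have "(\<lambda>m. (\<Sum>i<n. u i m) + R m) = (\<lambda>m. \<Sum>i<n. w i m)"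
    unfolding R_def by (simp add: sum_subtractf)
  then have "lp_norm s (\<lambda>m. \<Sum>i<n. w i m) \<le> lp_norm s (\<lambda>m. \<Sum>i<n. u i m) + lp_norm s R"
    using lp_minkowski[OF s U R(1)] by simp
  ultimately show ?thesis using R(2) by linarith
qed

text \<open>The partial sums are within distance \<open>\<Sum>i. \<epsilon> i \<le> 1\<close> of sums of the disjointly supported
  blocks produced by the gliding hump.\<close>

lemma null_sequence_partial_sums_growth:
  fixes w :: "nat \<Rightarrow> nat \<Rightarrow> complex"
  assumes s: "1 \<le> s" and w: "\<And>k. w k \<in> lp_set s" and null: "\<And>j. (\<lambda>k. w k j) \<longlonglongrightarrow> 0"
    and a: "0 < a" and bounds: "\<And>k. a \<le> lp_norm s (w k)" "\<And>k. lp_norm s (w k) \<le> b"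
  obtains kk where "strict_mono kk"
    "\<And>n. real n powr (1/s) * (a/2) \<le> lp_norm s (\<lambda>m. \<Sum>i<n. w (kk i) m) + 1"
    "\<And>n. lp_norm s (\<lambda>m. \<Sum>i<n. w (kk i) m) \<le> real n powr (1/s) * b + 1"
proof -
  have s0: "0 < s" using s by simp
  obtain \<epsilon> :: "nat \<Rightarrow> real" where \<epsilon>: "\<And>i. 0 < \<epsilon> i" "\<And>i. \<epsilon> i \<le> min (a/2) 1" "\<And>n. (\<Sum>i<n. \<epsilon> i) \<le> min (a/2) 1"
    using geometric_error_sequence[of "min (a/2) 1"] a by (metis half_gt_zero min_less_iff_conj zero_less_one)
  obtain kk u where kk: "strict_mono kk" and u: "\<And>i. u i \<in> lp_set s"
    and u_up: "\<And>i. lp_norm s (u i) \<le> lp_norm s (w (kk i))"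
    and disj: "\<And>i j m. i \<noteq> j \<Longrightarrow> u i m = 0 \<or> u j m = 0"
    and close: "\<And>i. lp_norm s (\<lambda>n. w (kk i) n - u i n) \<le> \<epsilon> i"
    using gliding_hump[where \<epsilon>=\<epsilon>, OF s w null \<epsilon>(1)] by blast
  have d: "(\<lambda>n. w (kk i) n - u i n) \<in> lp_set s" for i using lp_diff(1)[OF s w u] .
  have u_low: "a / 2 \<le> lp_norm s (u i)" for i
  proof -
    have "lp_norm s (w (kk i)) \<le> lp_norm s (u i) + lp_norm s (\<lambda>n. w (kk i) n - u i n)"
      using lp_minkowski[OF s u d, of i i] by simp
    then show ?thesis using bounds(1)[of "kk i"] close[of i] \<epsilon>(2)[of i] by linarith
  qed
  have U_bounds: "real n powr (1/s) * (a/2) \<le> lp_norm s (\<lambda>m. \<Sum>i<n. u i m)"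
    "lp_norm s (\<lambda>m. \<Sum>i<n. u i m) \<le> real n powr (1/s) * b" for n
    using lp_norm_sum_disjoint[where a="a/2" and b=b, OF s0 u disj] a u_low u_up bounds(2)
    by (meson half_gt_zero less_imp_le order_trans)+
  have sums_close: "\<bar>lp_norm s (\<lambda>m. \<Sum>i<n. w (kk i) m) - lp_norm s (\<lambda>m. \<Sum>i<n. u i m)\<bar> \<le> 1" for n
    using lp_norm_sum_close[where w="\<lambda>i. w (kk i)", OF s w u close, of n] \<epsilon>(3)[of n] by linarith
  show ?thesis
  proof (rule that[OF kk])
    fix n
    show "real n powr (1/s) * (a/2) \<le> lp_norm s (\<lambda>m. \<Sum>i<n. w (kk i) m) + 1"
      using U_bounds(1)[of n] abs_le_D2[OF sums_close[of n]] by linarith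
    show "lp_norm s (\<lambda>m. \<Sum>i<n. w (kk i) m) \<le> real n powr (1/s) * b + 1"
      using U_bounds(2)[of n] abs_le_D1[OF sums_close[of n]] by linarith
  qed
qed

definition unit_seq :: "nat \<Rightarrow> nat \<Rightarrow> complex" where
  "unit_seq a n = (if n = a then 1 else 0)"

lemma unit_seq_lp: "unit_seq a \<in> lp_set s" "lp_sum s (unit_seq a) = 1"
proof -
  have "unit_seq a n = 0" if "Suc a \<le> n" for n using that by (simp add: unit_seq_def)
  note finite = lp_sum_finite_support[of "Suc a", OF this]
  show "unit_seq a \<in> lp_set s" by (rule finite(1))
  have "cmod (unit_seq a n) powr s = (if n = a then 1 else 0)" for n by (simp add: unit_seq_def)
  then show "lp_sum s (unit_seq a) = 1" by (simp add: finite(2))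
qed

lemma bounded_coordinatewise_convergent_subseq:
  fixes y :: "nat \<Rightarrow> nat \<Rightarrow> complex"
  assumes B: "\<And>n m. cmod (y n m) \<le> B"
  obtains \<sigma> l where "strict_mono \<sigma>" "\<And>m. (\<lambda>k. y (\<sigma> k) m) \<longlonglongrightarrow> l m"
proof -
  define K where "K = PiE (UNIV :: nat set) (\<lambda>_. cball (0::complex) B)"
  have "compactin (product_topology (\<lambda>_. euclidean) UNIV) K"
    unfolding K_def by (subst compactin_PiE) auto
  then have "seq_compact K" unfolding euclidean_product_topology by (simp add: compact_imp_seq_compact)
  moreover have "\<forall>n. y n \<in> K" unfolding K_def using B by auto
  ultimately obtain l \<sigma> where "strict_mono \<sigma>" "(y \<circ> \<sigma>) \<longlonglongrightarrow> l"
    unfolding seq_compact_def by metis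
  moreover have "(\<lambda>k. y (\<sigma> k) m) \<longlonglongrightarrow> l m" if "(y \<circ> \<sigma>) \<longlonglongrightarrow> l" for m
  proof -
    have "continuous_on UNIV (\<lambda>x::nat \<Rightarrow> complex. x m)" by simp
    then have "isCont (\<lambda>x::nat \<Rightarrow> complex. x m) l"
      using continuous_on_eq_continuous_at[OF open_UNIV] by blast
    from isCont_tendsto_compose[OF this that] show ?thesis by (simp add: o_def)
  qed
  ultimately show ?thesis using that by blast
qed

section \<open>Operators between \<open>\<ell>\<^sup>r\<close> and \<open>\<ell>\<^sup>s\<close>\<close>

lemma bounded_op_lp_space:
  assumes "bounded_op (lp_space r) (lp_space s) A"
  shows lp_op_lp_set: "\<And>x. x \<in> lp_set r \<Longrightarrow> A x \<in> lp_set s"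
    and lp_op_add: "\<And>x y. x \<in> lp_set r \<Longrightarrow> y \<in> lp_set r \<Longrightarrow> A (\<lambda>n. x n + y n) = (\<lambda>n. A x n + A y n)"
    and lp_op_smul: "\<And>c x. x \<in> lp_set r \<Longrightarrow> A (\<lambda>n. c * x n) = (\<lambda>n. c * A x n)"
    and lp_op_bound: "\<exists>C. \<forall>x\<in>lp_set r. lp_norm s (A x) \<le> C * lp_norm r x"
  using assms unfolding bounded_op_def lp_space_simps by blast+

lemma lp_op_diff:
  assumes A: "bounded_op (lp_space r) (lp_space s) A" and r: "0 < r"
    and x: "x \<in> lp_set r" and y: "y \<in> lp_set r"
  shows "A (\<lambda>n. x n - y n) = (\<lambda>n. A x n - A y n)"
  using lp_op_add[OF A x lp_smul(1)[OF y r, of "-1"]] lp_op_smul[OF A y, of "-1"] by simp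

lemma lp_op_sum:
  fixes f :: "nat \<Rightarrow> nat \<Rightarrow> complex"
  assumes A: "bounded_op (lp_space r) (lp_space s) A" and r: "1 \<le> r" and f: "\<And>i. f i \<in> lp_set r"
  shows "A (\<lambda>m. \<Sum>i<k. f i m) = (\<lambda>m. \<Sum>i<k. A (f i) m)"
proof (induction k)
  case 0
  show ?case using lp_op_smul[OF A lp_set_zero, of 0] by simp
next
  case (Suc k)
  have "(\<lambda>m. \<Sum>i<k. f i m) \<in> lp_set r" using lp_norm_sum_le[OF r] f by blast
  from lp_op_add[OF A this f] Suc show ?case by simp
qed

text \<open>By compactness the images of the unit vectors \<open>e\<^sub>a\<close> converge coordinatewise along a
  subsequence \<open>\<sigma>\<close>; take \<open>z\<^sub>k = e\<^bsub>\<sigma>(2k)\<^esub> - e\<^bsub>\<sigma>(2k+1)\<^esub>\<close>.\<close>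

lemma lp_op_null_on_disjoint_sequence:
  assumes r: "1 \<le> r" and s: "0 < s" and A: "bounded_op (lp_space r) (lp_space s) A"
  obtains z where "\<And>k. z k \<in> lp_set r" "\<And>k. lp_norm r (z k) = 2 powr (1/r)"
    "\<And>i j m. i \<noteq> j \<Longrightarrow> z i m = 0 \<or> z j m = 0" "\<And>j. (\<lambda>k. A (z k) j) \<longlonglongrightarrow> 0"
proof -
  have r0: "0 < r" using r by simp
  obtain C where C: "\<forall>x\<in>lp_set r. lp_norm s (A x) \<le> C * lp_norm r x" using lp_op_bound[OF A] ..
  have unit_norm: "lp_norm r (unit_seq a) = 1" for a by (simp add: lp_norm_def unit_seq_lp)
  have "cmod (A (unit_seq a) m) \<le> C" for a m
    using norm_le_lp_norm[OF lp_op_lp_set[OF A unit_seq_lp(1)[of a r]] s, of m] C unit_seq_lp(1)[of a r]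
    by (force simp: unit_norm)
  then obtain \<sigma> l where \<sigma>: "strict_mono \<sigma>" and lim: "\<And>m. (\<lambda>k. A (unit_seq (\<sigma> k)) m) \<longlonglongrightarrow> l m"
    using bounded_coordinatewise_convergent_subseq[of "\<lambda>k. A (unit_seq k)"] by blast
  define z where "z k = (\<lambda>n. unit_seq (\<sigma> (2*k)) n - unit_seq (\<sigma> (2*k+1)) n)" for k
  show ?thesis
  proof (rule that)
    show "z k \<in> lp_set r" for k unfolding z_def using lp_diff(1)[OF r unit_seq_lp(1) unit_seq_lp(1)] .
    show "lp_norm r (z k) = 2 powr (1/r)" for k
    proof -
      have "\<sigma> (2*k) \<noteq> \<sigma> (2*k+1)" using \<sigma> by (simp add: strict_mono_eq)
      then have disj: "unit_seq (\<sigma> (2*k)) n = 0 \<or> (-1) * unit_seq (\<sigma> (2*k+1)) n = 0" for n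
        by (simp add: unit_seq_def)
      have "lp_sum r (z k) = lp_sum r (unit_seq (\<sigma> (2*k))) + lp_sum r (\<lambda>n. (-1) * unit_seq (\<sigma> (2*k+1)) n)"
        using lp_add_disjoint(2)[OF unit_seq_lp(1) lp_smul(1)[OF unit_seq_lp(1) r0] disj] by (simp add: z_def)
      also have "\<dots> = 2" using lp_smul(2)[OF unit_seq_lp(1) r0, of "-1"] by (simp add: unit_seq_lp(2))
      finally show ?thesis by (simp add: lp_norm_def)
    qed
    show "z i m = 0 \<or> z j m = 0" if "i \<noteq> j" for i j m
      using that \<sigma> unfolding z_def unit_seq_def by (auto simp: strict_mono_eq)
    show "(\<lambda>k. A (z k) j) \<longlonglongrightarrow> 0" for j
    proof -
      have "strict_mono (\<lambda>k::nat. 2*k)" "strict_mono (\<lambda>k::nat. 2*k+1)" by (auto simp: strict_mono_def)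
      then have "(\<lambda>k. A (unit_seq (\<sigma> (2*k))) j - A (unit_seq (\<sigma> (2*k+1))) j) \<longlonglongrightarrow> l j - l j"
        using LIMSEQ_subseq_LIMSEQ[OF lim] by (intro tendsto_diff) (auto simp: o_def)
      then show ?thesis
        unfolding z_def using lp_op_diff[OF A r0 unit_seq_lp(1) unit_seq_lp(1)] by simp
    qed
  qed
qed

lemma powr_not_dominated:
  fixes \<alpha> \<beta> c K1 K2 :: real
  assumes "\<alpha> < \<beta>" "0 < \<beta>" "0 < c"
    and bound: "\<And>n::nat. c * real n powr \<beta> \<le> K1 * real n powr \<alpha> + K2"
  shows False
proof -
  have "(\<lambda>n. K1 * real n powr (\<alpha> - \<beta>) + K2 * real n powr (- \<beta>)) \<longlonglongrightarrow> K1 * 0 + K2 * 0"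
    using assms by (intro tendsto_intros tendsto_neg_powr filterlim_real_sequentially) auto
  moreover have "c \<le> K1 * real n powr (\<alpha> - \<beta>) + K2 * real n powr (- \<beta>)" if "1 \<le> n" for n
  proof -
    have pos: "0 < real n powr \<beta>" using that by simp
    have "c * real n powr \<beta> \<le> (K1 * real n powr (\<alpha> - \<beta>) + K2 * real n powr (- \<beta>)) * real n powr \<beta>"
      using bound[of n] that by (simp add: algebra_simps powr_add[symmetric] powr_minus)
    then show ?thesis using pos by simp
  qed
  ultimately have "c \<le> 0" by (intro LIMSEQ_le_const) auto
  then show False using \<open>0 < c\<close> by simp
qed

lemma powr_growth_rates_eq:
  fixes r s c1 c2 K1 K2 K3 K4 :: real
  assumes "0 < r" "0 < s" "0 < c1" "0 < c2"
    and "\<And>n::nat. c1 * real n powr (1/r) \<le> K1 * real n powr (1/s) + K2"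
    and "\<And>n::nat. c2 * real n powr (1/s) \<le> K3 * real n powr (1/r) + K4"
  shows "r = s"
proof (rule ccontr)
  assume "r \<noteq> s"
  then consider "r < s" | "s < r" by linarith
  then show False
  proof cases
    case 1
    then have "1/s < 1/r" using assms(1) by (simp add: frac_less2)
    then show False by (rule powr_not_dominated[of "1/s" "1/r" c1 K1 K2]) (use assms in auto)
  next
    case 2
    then have "1/r < 1/s" using assms(2) by (simp add: frac_less2)
    then show False by (rule powr_not_dominated[of "1/r" "1/s" c2 K3 K4]) (use assms in auto)
  qed
qed

definition isomorphic_embedding :: "'a cnspace \<Rightarrow> 'b cnspace \<Rightarrow> ('a \<Rightarrow> 'b) \<Rightarrow> bool" where
  "isomorphic_embedding X Y A \<longleftrightarrow>
     bounded_op X Y A \<and> (\<exists>D. \<forall>x\<in>space X. vnorm X x \<le> D * vnorm Y (A x))"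

theorem lp_no_isomorphic_embedding:
  assumes r: "1 \<le> r" and s: "1 \<le> s" and "r \<noteq> s"
  shows "\<not> isomorphic_embedding (lp_space r) (lp_space s) A"
proof
  assume "isomorphic_embedding (lp_space r) (lp_space s) A"
  then have A: "bounded_op (lp_space r) (lp_space s) A"
    and "\<exists>D. \<forall>x\<in>lp_set r. lp_norm r x \<le> D * lp_norm s (A x)"
    unfolding isomorphic_embedding_def lp_space_simps by blast+
  then obtain C D where up: "\<And>x. x \<in> lp_set r \<Longrightarrow> lp_norm s (A x) \<le> C * lp_norm r x"
    and low: "\<And>x. x \<in> lp_set r \<Longrightarrow> lp_norm r x \<le> D * lp_norm s (A x)"
    using lp_op_bound[OF A] by blast
  have s0: "0 < s" using s by simp
  obtain z where z: "\<And>k. z k \<in> lp_set r" "\<And>k. lp_norm r (z k) = 2 powr (1/r)"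
    "\<And>i j m. i \<noteq> j \<Longrightarrow> z i m = 0 \<or> z j m = 0" and null: "\<And>j. (\<lambda>k. A (z k) j) \<longlonglongrightarrow> 0"
    using lp_op_null_on_disjoint_sequence[OF r s0 A] by blast
  define c where "c = 2 powr (1/r)"
  have c: "0 < c" unfolding c_def by simp
  have D: "0 < D"
    using low[OF z(1)[of 0]] z(2)[of 0] c lp_norm_nonneg[of s "A (z 0)"] unfolding c_def
    by (metis mult_nonpos_nonneg not_less order_trans order_less_le_trans)
  have Az_bounds: "c / D \<le> lp_norm s (A (z k))" "lp_norm s (A (z k)) \<le> C * c" for k
    using low[OF z(1)] up[OF z(1)] z(2) D unfolding c_def by (auto simp: divide_le_eq mult.commute)
  obtain kk where "strict_mono kk"
    and sums_low: "\<And>n. real n powr (1/s) * (c / D / 2) \<le> lp_norm s (\<lambda>m. \<Sum>i<n. A (z (kk i)) m) + 1"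
    and sums_up: "\<And>n. lp_norm s (\<lambda>m. \<Sum>i<n. A (z (kk i)) m) \<le> real n powr (1/s) * (C * c) + 1"
    using null_sequence_partial_sums_growth[OF s lp_op_lp_set[OF A z(1)] null _ Az_bounds] c D by auto
  define X where "X n = (\<lambda>m. \<Sum>i<n. z (kk i) m)" for n
  have zk_disj: "z (kk i) m = 0 \<or> z (kk j) m = 0" if "i \<noteq> j" for i j m
    using z(3) that \<open>strict_mono kk\<close> by (simp add: strict_mono_eq)
  have X: "X n \<in> lp_set r" for n unfolding X_def using lp_sum_disjoint(1)[OF z(1) zk_disj] .
  have X_norm: "lp_norm r (X n) = real n powr (1/r) * c" for n
    using lp_norm_sum_disjoint[OF _ z(1) zk_disj, where a=c and b=c and n=n] r z(2) c
    unfolding X_def c_def by (auto intro: antisym)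
  have AX: "A (X n) = (\<lambda>m. \<Sum>i<n. A (z (kk i)) m)" for n
    unfolding X_def using lp_op_sum[OF A r, of "\<lambda>i. z (kk i)"] z by blast
  have growth_r: "c * real n powr (1/r) \<le> (D * (C * c)) * real n powr (1/s) + D" for n
  proof -
    have "c * real n powr (1/r) \<le> D * lp_norm s (A (X n))" using low[OF X] X_norm by (simp add: mult.commute)
    also have "\<dots> \<le> D * (real n powr (1/s) * (C * c) + 1)" using sums_up D AX by (simp add: mult_left_mono)
    finally show ?thesis by (simp add: algebra_simps)
  qed
  have growth_s: "(c / D / 2) * real n powr (1/s) \<le> (C * c) * real n powr (1/r) + 1" for n
    using sums_low[of n] up[OF X, of n] X_norm AX by (simp add: algebra_simps)
  have "0 < c / D / 2" using c D by simp
  from powr_growth_rates_eq[OF _ _ c this growth_r growth_s] r s have "r = s" by simp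
  with \<open>r \<noteq> s\<close> show False ..
qed

section \<open>Equivalence after extension\<close>

lemma dsum_simps:
  "space (Defs.dsum X Y) = space X \<times> space Y"
  "vadd (Defs.dsum X Y) (x1, y1) (x2, y2) = (vadd X x1 x2, vadd Y y1 y2)"
  "smul (Defs.dsum X Y) c (x, y) = (smul X c x, smul Y c y)"
  "vzero (Defs.dsum X Y) = (vzero X, vzero Y)"
  "vnorm (Defs.dsum X Y) (x, y) = sqrt ((vnorm X x)\<^sup>2 + (vnorm Y y)\<^sup>2)"
  by (simp_all add: Defs.dsum_def)

lemma sqrt_sum_squares_cross_bound:
  fixes a b n1 n2 C1 C2 :: real
  assumes "0 \<le> a" "0 \<le> b" "0 \<le> n1" "0 \<le> n2" "a \<le> C1 * n2" "b \<le> C2 * n1"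
  shows "sqrt (a\<^sup>2 + b\<^sup>2) \<le> max \<bar>C1\<bar> \<bar>C2\<bar> * sqrt (n1\<^sup>2 + n2\<^sup>2)"
proof -
  define K where "K = max \<bar>C1\<bar> \<bar>C2\<bar>"
  have K: "0 \<le> K" unfolding K_def by auto
  have "C1 * n2 \<le> K * n2" "C2 * n1 \<le> K * n1" unfolding K_def using assms by (auto intro: mult_right_mono)
  then have "a\<^sup>2 \<le> (K * n2)\<^sup>2" "b\<^sup>2 \<le> (K * n1)\<^sup>2" using assms by (auto intro: power_mono)
  then have "sqrt (a\<^sup>2 + b\<^sup>2) \<le> sqrt (K\<^sup>2 * (n1\<^sup>2 + n2\<^sup>2))"
    by (intro real_sqrt_le_mono) (simp add: power_mult_distrib algebra_simps)
  also have "\<dots> = K * sqrt (n1\<^sup>2 + n2\<^sup>2)" using K by (simp add: real_sqrt_mult)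
  finally show ?thesis unfolding K_def .
qed

lemma bounded_op_cross:
  assumes f: "bounded_op X2 Y1 f" and g: "bounded_op X1 Y2 g"
    and norms: "\<And>x. 0 \<le> vnorm X1 x" "\<And>x. 0 \<le> vnorm X2 x" "\<And>y. 0 \<le> vnorm Y1 y" "\<And>y. 0 \<le> vnorm Y2 y"
  shows "bounded_op (Defs.dsum X1 X2) (Defs.dsum Y1 Y2) (\<lambda>(x1, x2). (f x2, g x1))"
proof -
  obtain C1 where C1: "\<forall>x\<in>space X2. vnorm Y1 (f x) \<le> C1 * vnorm X2 x"
    using f unfolding bounded_op_def by blast
  obtain C2 where C2: "\<forall>x\<in>space X1. vnorm Y2 (g x) \<le> C2 * vnorm X1 x"
    using g unfolding bounded_op_def by blast
  have "\<forall>z\<in>space (Defs.dsum X1 X2). vnorm (Defs.dsum Y1 Y2) ((\<lambda>(x1, x2). (f x2, g x1)) z)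
      \<le> max \<bar>C1\<bar> \<bar>C2\<bar> * vnorm (Defs.dsum X1 X2) z"
    using C1 C2 norms by (auto simp: dsum_simps intro!: sqrt_sum_squares_cross_bound)
  then show ?thesis using f g unfolding bounded_op_def by (auto simp: dsum_simps)
qed

lemma bounded_op_id: "bounded_op X X (\<lambda>x. x)"
  unfolding bounded_op_def by (auto intro!: exI[of _ 1])

text \<open>\<open>E [S 0; 0 id\<^sub>X] F = [T 0; 0 id\<^sub>Y]\<close> with \<open>E = [0 id; id 0]\<close> and \<open>F = [0 S\<^sup>-\<^sup>1; T 0]\<close>.\<close>

lemma equiv_ext_with_swap:
  assumes T: "invertible_op X X T" and S: "invertible_op Y Y S"
    and norms: "\<And>x. 0 \<le> vnorm X x" "\<And>y. 0 \<le> vnorm Y y"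
  shows "equiv_ext_with X Y Y X T S"
proof -
  obtain T' where T': "bounded_op X X T'" "\<forall>x\<in>space X. T' (T x) = x" "\<forall>x\<in>space X. T (T' x) = x"
    using T unfolding invertible_op_def by blast
  obtain S' where S': "bounded_op Y Y S'" "\<forall>y\<in>space Y. S' (S y) = y" "\<forall>y\<in>space Y. S (S' y) = y"
    using S unfolding invertible_op_def by blast
  have TS: "bounded_op X X T" "bounded_op Y Y S" using T S unfolding invertible_op_def by auto
  define E where "E = (\<lambda>(y::'b, x::'a). (x, y))"
  define F where "F = (\<lambda>(x, y). (S' y, T x))"
  define G where "G = (\<lambda>(y, x). (T' x, S y))"
  have "invertible_op (Defs.dsum Y X) (Defs.dsum X Y) E"
    unfolding invertible_op_def
  proof (intro conjI exI)
    show "bounded_op (Defs.dsum Y X) (Defs.dsum X Y) E"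
      unfolding E_def by (rule bounded_op_cross[OF bounded_op_id bounded_op_id]) (use norms in auto)
    show "bounded_op (Defs.dsum X Y) (Defs.dsum Y X) (\<lambda>(x, y). (y, x))"
      by (rule bounded_op_cross[OF bounded_op_id bounded_op_id]) (use norms in auto)
  qed (auto simp: E_def)
  moreover have "invertible_op (Defs.dsum X Y) (Defs.dsum Y X) F"
  proof -
    have maps: "T x \<in> space X" "T' x \<in> space X" if "x \<in> space X" for x
      using TS(1) T'(1) that unfolding bounded_op_def by auto
    have "S y \<in> space Y" "S' y \<in> space Y" if "y \<in> space Y" for y
      using TS(2) S'(1) that unfolding bounded_op_def by auto
    with maps show ?thesis
      unfolding invertible_op_def F_def
      using bounded_op_cross[OF S'(1) TS(1) norms(1,2,2,1)] bounded_op_cross[OF T'(1) TS(2) norms(2,1,1,2)]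
        T' S' by (intro conjI exI[of _ G]) (auto simp: G_def dsum_simps)
  qed
  moreover have "\<forall>z\<in>space (Defs.dsum X Y). (T (fst z), snd z) = E ((\<lambda>(y, y'). (S y, y')) (F z))"
    using S'(3) by (auto simp: E_def F_def dsum_simps)
  ultimately show ?thesis unfolding equiv_ext_with_def by blast
qed

lemma complex_banach_zero:
  assumes Z: "complex_banach Z"
  shows "vzero Z \<in> space Z" "vadd Z (vzero Z) (vzero Z) = vzero Z" "smul Z c (vzero Z) = vzero Z"
    "vnorm Z (vzero Z) = 0"
proof -
  show z: "vzero Z \<in> space Z" "vadd Z (vzero Z) (vzero Z) = vzero Z" "vnorm Z (vzero Z) = 0"
    using Z unfolding complex_banach_def by auto
  have "smul Z c (vzero Z) \<in> space Z" "vnorm Z (smul Z c (vzero Z)) = 0"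
    using Z z unfolding complex_banach_def by auto
  moreover have "\<forall>x\<in>space Z. vnorm Z x = 0 \<longleftrightarrow> x = vzero Z"
    using Z unfolding complex_banach_def by blast
  ultimately show "smul Z c (vzero Z) = vzero Z" by blast
qed

lemma one_sided_extension_embedding:
  assumes E: "invertible_op (Defs.dsum Y (trivial_space :: 'c cnspace)) (Defs.dsum X Z) E"
    and Z: "complex_banach (Z :: 'c cnspace)"
    and norms: "\<And>x. 0 \<le> vnorm X x" "\<And>y. 0 \<le> vnorm Y y"
  shows "\<exists>A. isomorphic_embedding X Y A"
proof -
  let ?Y0 = "Defs.dsum Y (trivial_space :: 'c cnspace)"
  obtain g where g: "bounded_op (Defs.dsum X Z) ?Y0 g" and Eg: "\<forall>z\<in>space (Defs.dsum X Z). E (g z) = z"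
    using E unfolding invertible_op_def by blast
  obtain D where D: "\<forall>y\<in>space ?Y0. vnorm (Defs.dsum X Z) (E y) \<le> D * vnorm ?Y0 y"
    using E unfolding invertible_op_def bounded_op_def by blast
  obtain C where C: "\<forall>z\<in>space (Defs.dsum X Z). vnorm ?Y0 (g z) \<le> C * vnorm (Defs.dsum X Z) z"
    using g unfolding bounded_op_def by blast
  note zero = complex_banach_zero[OF Z]
  define A where "A x = fst (g (x, vzero Z))" for x
  have in_XZ: "(x, vzero Z) \<in> space (Defs.dsum X Z)" if "x \<in> space X" for x
    using that zero by (simp add: dsum_simps)
  have g_in: "g z \<in> space Y \<times> {undefined}" if "z \<in> space (Defs.dsum X Z)" for z
    using g that unfolding bounded_op_def by (auto simp: dsum_simps trivial_space_def)
  have gA: "g (x, vzero Z) = (A x, undefined)" "A x \<in> space Y" if "x \<in> space X" for x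
    using g_in[OF in_XZ[OF that]] unfolding A_def by (auto simp: prod_eq_iff)
  have norm_XZ: "vnorm (Defs.dsum X Z) (x, vzero Z) = vnorm X x" for x
    using zero norms(1)[of x] by (simp add: dsum_simps)
  have norm_Y0: "vnorm ?Y0 (y, u) = vnorm Y y" for y u
    using norms(2)[of y] by (simp add: dsum_simps trivial_space_def)
  have "A (vadd X x y) = vadd Y (A x) (A y)" if "x \<in> space X" "y \<in> space X" for x y
  proof -
    have "g (vadd (Defs.dsum X Z) (x, vzero Z) (y, vzero Z)) = vadd ?Y0 (g (x, vzero Z)) (g (y, vzero Z))"
      using g in_XZ that unfolding bounded_op_def by blast
    then have "fst (g (vadd X x y, vzero Z)) = vadd Y (A x) (A y)"
      using gA(1) that zero by (simp add: dsum_simps)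
    then show ?thesis by (simp add: A_def)
  qed
  moreover have "A (smul X c x) = smul Y c (A x)" if "x \<in> space X" for c x
  proof -
    have "g (smul (Defs.dsum X Z) c (x, vzero Z)) = smul ?Y0 c (g (x, vzero Z))"
      using g in_XZ that unfolding bounded_op_def by blast
    then have "fst (g (smul X c x, vzero Z)) = smul Y c (A x)"
      using gA(1) that zero by (simp add: dsum_simps)
    then show ?thesis by (simp add: A_def)
  qed
  moreover have "vnorm Y (A x) \<le> C * vnorm X x" if "x \<in> space X" for x
    using C in_XZ[OF that] gA[OF that] by (force simp: norm_XZ norm_Y0)
  moreover have "vnorm X x \<le> D * vnorm Y (A x)" if "x \<in> space X" for x
  proof -
    have "(A x, undefined) \<in> space ?Y0" using gA[OF that] by (simp add: dsum_simps trivial_space_def)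
    moreover have "E (A x, undefined) = (x, vzero Z)" using Eg in_XZ[OF that] gA[OF that] by metis
    ultimately show ?thesis using D by (force simp: norm_XZ norm_Y0)
  qed
  ultimately have "isomorphic_embedding X Y A"
    unfolding isomorphic_embedding_def bounded_op_def using gA(2) by blast
  then show ?thesis by blast
qed

lemma equiv_after_one_sided_ext_embedding:
  assumes "equiv_after_one_sided_ext TYPE('c) X Y T S"
    and norms: "\<And>x. 0 \<le> vnorm X x" "\<And>y. 0 \<le> vnorm Y y"
  shows "(\<exists>A. isomorphic_embedding X Y A) \<or> (\<exists>A. isomorphic_embedding Y X A)"
proof -
  from assms(1) consider (left) Z E where "complex_banach (Z :: 'c cnspace)"
      "invertible_op (Defs.dsum Y (trivial_space :: 'c cnspace)) (Defs.dsum X Z) E"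
    | (right) Z F where "complex_banach (Z :: 'c cnspace)"
      "invertible_op (Defs.dsum X (trivial_space :: 'c cnspace)) (Defs.dsum Y Z) F"
    unfolding equiv_after_one_sided_ext_def equiv_ext_with_def by blast
  then show ?thesis
  proof cases
    case left
    then show ?thesis using one_sided_extension_embedding[OF _ _ norms] by blast
  next
    case right
    then show ?thesis using one_sided_extension_embedding[OF _ _ norms(2,1)] by blast
  qed
qed

theorem corollary4p4:
  fixes p q :: real
    and T :: "(nat \<Rightarrow> complex) \<Rightarrow> (nat \<Rightarrow> complex)"
    and S :: "(nat \<Rightarrow> complex) \<Rightarrow> (nat \<Rightarrow> complex)"
  assumes "1 \<le> p" and "1 \<le> q" and "p \<noteq> q"
    and "invertible_op (lp_space p) (lp_space p) T"
    and "invertible_op (lp_space q) (lp_space q) S"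
  shows "equiv_after_ext TYPE(nat \<Rightarrow> complex) TYPE(nat \<Rightarrow> complex)
           (lp_space p) (lp_space q) T S
         \<and> \<not> equiv_after_one_sided_ext TYPE('c) (lp_space p) (lp_space q) T S"
proof
  have norms: "\<And>x. 0 \<le> vnorm (lp_space s) x" for s by (simp add: lp_space_simps lp_norm_nonneg)
  show "equiv_after_ext TYPE(nat \<Rightarrow> complex) TYPE(nat \<Rightarrow> complex) (lp_space p) (lp_space q) T S"
    unfolding equiv_after_ext_def
    using complex_banach_lp_space assms equiv_ext_with_swap[OF assms(4,5) norms norms] by blast
  show "\<not> equiv_after_one_sided_ext TYPE('c) (lp_space p) (lp_space q) T S"
    using equiv_after_one_sided_ext_embedding[OF _ norms norms] lp_no_isomorphic_embedding assms(1-3)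
    by metis
qed

end
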